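(* Let $\lambda<\mathfrak u$ be a cardinal and let $X$ be a set of reals with $X=\bigcup_{\alpha<\lambda}X_\alpha$, where each subspace $X_\alpha$ satisfies $\mathrm{Split}(\mathrm T,\mathrm T)$. Then $X$ satisfies $\mathrm{Split}(\mathrm T,\mathrm T)$. The same holds with $\mathrm{Split}(B_{\mathrm T},B_{\mathrm T})$ in place of $\mathrm{Split}(\mathrm T,\mathrm T)$, and with $\mathrm{Split}(C_{\mathrm T},C_{\mathrm T})$ in place of $\mathrm{Split}(\mathrm T,\mathrm T)$. In particular these three properties are closed under countable unions.
   Context: A set of reals is an infinite topological space homeomorphic to a subset of $\mathbb R$. A cover of a space $X$ is a family $\mathcal U$ of subsets of $X$ with $\bigcup\mathcal U=X$ such that $X\not\subseteq U$ for all $U\in\mathcal U$. It is a $\tau$-cover if every $x\in X$ lies in infinitely many members and for all $x,y\in X$ at least one of $\{U\in\mathcal U: x\in U, y\notin U\}$, $\{U\in\mathcal U: y\in U, x\notin U\}$ is finite. $\mathrm T$ denotes the collection of open $\tau$-covers, $B_{\mathrm T}$ of countable Borel $\tau$-covers, $C_{\mathrm T}$ of countable clopen $\tau$-covers of $X$. $X$ satisfies $\mathrm{Split}(\mathfrak U,\mathfrak V)$ if every $\mathcal U\in\mathfrak U$ can be partitioned into two disjoint subfamilies each containing a subfamily belonging to $\mathfrak V$. $\mathfrak u$ is the minimal cardinality of a family $B$ of infinite subsets of $\mathbb N$ that is a base for a nonprincipal ultrafilter $U$ on $\mathbb N$, i.e. $U=\{a\subseteq\mathbb N:\exists b\in B\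 (b\setminus a\text{ finite})\}$. *)

theory Defs
  imports "HOL-Analysis.Analysis" "HOL-Library.Equipollence"
begin

definition nonprincipal_ultrafilter :: "nat set set \<Rightarrow> bool" where
  "nonprincipal_ultrafilter U \<longleftrightarrow>
     {} \<notin> U \<and> UNIV \<in> U \<and>
     (\<forall>a b. a \<in> U \<and> a \<subseteq> b \<longrightarrow> b \<in> U) \<and>
     (\<forall>a b. a \<in> U \<and> b \<in> U \<longrightarrow> a \<inter> b \<in> U) \<and>
     (\<forall>a. a \<in> U \<or> - a \<in> U) \<and>
     (\<forall>a. finite a \<longrightarrow> a \<notin> U)"

definition ultrafilter_base :: "nat set set \<Rightarrow> bool" where
  "ultrafilter_base B \<longleftrightarrow>
     (\<forall>b\<in>B. infinite b) \<and>
     nonprincipal_ultrafilter {a. \<exists>b\<in>B. finite (b - a)}"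

text \<open>The cardinality of I is below the ultrafilter number u: no ultrafilter
  base has cardinality at most |I|.\<close>
definition below_u :: "'i set \<Rightarrow> bool" where
  "below_u I \<longleftrightarrow> (\<forall>B. ultrafilter_base B \<longrightarrow> \<not> (B \<lesssim> I))"

definition is_cover :: "real set \<Rightarrow> real set set \<Rightarrow> bool" where
  "is_cover X \<U> \<longleftrightarrow> (\<forall>U\<in>\<U>. U \<subseteq> X) \<and> \<Union>\<U> = X \<and> (\<forall>U\<in>\<U>. \<not> X \<subseteq> U)"

definition tau_cover :: "real set \<Rightarrow> real set set \<Rightarrow> bool" where
  "tau_cover X \<U> \<longleftrightarrow> is_cover X \<U> \<and>
     (\<forall>x\<in>X. infinite {U\<in>\<U>. x \<in> U}) \<and>
     (\<forall>x\<in>X. \<forall>y\<in>X. finite {U\<in>\<U>. x \<in> U \<and> y \<notin> U} \<or> finite {U\<in>\<U>. y \<in> U \<and> x \<notin> U})"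

definition T_covers :: "real set \<Rightarrow> real set set set" where
  "T_covers X = {\<U>. tau_cover X \<U> \<and> (\<forall>U\<in>\<U>. openin (top_of_set X) U)}"

definition BT_covers :: "real set \<Rightarrow> real set set set" where
  "BT_covers X = {\<U>. tau_cover X \<U> \<and> countable \<U> \<and>
                      (\<forall>U\<in>\<U>. \<exists>B\<in>sets borel. U = X \<inter> B)}"

definition CT_covers :: "real set \<Rightarrow> real set set set" where
  "CT_covers X = {\<U>. tau_cover X \<U> \<and> countable \<U> \<and>
                      (\<forall>U\<in>\<U>. openin (top_of_set X) U \<and> closedin (top_of_set X) U)}"

definition Split :: "(real set \<Rightarrow> real set set set) \<Rightarrow> (real set \<Rightarrow> real set set set) \<Rightarrow> real set \<Rightarrow> bool" where
  "Split UU VV X \<longleftrightarrow>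
     (\<forall>\<U>\<in>UU X. \<exists>\<V>1 \<V>2. \<V>1 \<inter> \<V>2 = {} \<and> \<V>1 \<union> \<V>2 = \<U> \<and>
        (\<exists>\<W>. \<W> \<subseteq> \<V>1 \<and> \<W> \<in> VV X) \<and> (\<exists>\<W>. \<W> \<subseteq> \<V>2 \<and> \<W> \<in> VV X))"

end

theory Submission
  imports Defs
begin

(* Let U be a countable tau-cover of X, the union of the pieces X_alpha, and suppose U has no
   subfamily V such that every point of X lies in infinitely many members of V and of U - V.
   Then the subfamilies of U that contain, up to finitely many members, all members of U around
   some point of X form a nonprincipal ultrafilter on U; the tau-property makes them closed under
   intersection. If the points of a single piece X_alpha already generate this ultrafilter, the
   traces on X_alpha of the members of U form a tau-cover of X_alpha, and a splitting of it would
   pull back to a splitting of the ultrafilter. Otherwise each piece X_alpha misses some point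
   c_alpha of X, in the sense that no point of X_alpha lies in almost all members around c_alpha,
   and the sets of members around the points c_alpha form a base of the ultrafilter of size at
   most |I| < u. Open tau-covers have countable tau-subcovers by Lindelof's theorem, and u is
   uncountable since one set of naturals splits every member of a countable family of infinite
   sets. *)

definition occ :: "'a set set \<Rightarrow> 'a \<Rightarrow> 'a set set" where
  "occ \<U> x = {U\<in>\<U>. x \<in> U}"

lemma occ_subset: "occ \<U> x \<subseteq> \<U>"
  unfolding occ_def by blast

lemma occ_Diff_occ: "occ \<U> x - occ \<U> y = {U\<in>\<U>. x \<in> U \<and> y \<notin> U}"
  unfolding occ_def by blast

lemma tau_cover_iff:
  "tau_cover X \<U> \<longleftrightarrow>
     (\<forall>U\<in>\<U>. U \<subseteq> X \<and> \<not> X \<subseteq> U) \<and> (\<forall>x\<in>X. infinite (occ \<U> x)) \<and>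
     (\<forall>x\<in>X. \<forall>y\<in>X. finite (occ \<U> x - occ \<U> y) \<or> finite (occ \<U> y - occ \<U> x))"
proof -
  have "X \<subseteq> \<Union>\<U>" if "\<forall>x\<in>X. infinite (occ \<U> x)"
    using that unfolding occ_def by (metis (no_types, lifting) Union_iff empty_Collect_eq finite.emptyI subsetI)
  then show ?thesis
    unfolding tau_cover_def is_cover_def occ_Diff_occ by (auto simp: occ_def)
qed

lemma tau_cover_occ_infinite: "tau_cover X \<U> \<Longrightarrow> x \<in> X \<Longrightarrow> infinite (occ \<U> x)"
  unfolding tau_cover_iff by blast

lemma tau_cover_occ_comparable:
  "tau_cover X \<U> \<Longrightarrow> x \<in> X \<Longrightarrow> y \<in> X \<Longrightarrow>
     finite (occ \<U> x - occ \<U> y) \<or> finite (occ \<U> y - occ \<U> x)"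
  unfolding tau_cover_iff by blast

lemma tau_cover_subfamily:
  assumes "tau_cover X \<U>" "\<W> \<subseteq> \<U>" "\<forall>x\<in>X. infinite (occ \<W> x)"
  shows "tau_cover X \<W>"
proof -
  have "occ \<W> x - occ \<W> y \<subseteq> occ \<U> x - occ \<U> y" for x y
    using assms(2) unfolding occ_def by blast
  then show ?thesis
    using assms unfolding tau_cover_iff by (meson finite_subset subsetD)
qed

definition occ_filter :: "'a set \<Rightarrow> 'a set set \<Rightarrow> 'a set set set" where
  "occ_filter X \<U> = {\<A>. \<exists>x\<in>X. finite (occ \<U> x - \<A>)}"

lemma occ_in_occ_filter: "x \<in> X \<Longrightarrow> occ \<U> x \<in> occ_filter X \<U>"
  unfolding occ_filter_def by (auto intro!: bexI[of _ x])

lemma occ_filter_mono: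
  assumes "\<A> \<in> occ_filter X \<U>" "\<A> \<subseteq> \<B>"
  shows "\<B> \<in> occ_filter X \<U>"
proof -
  have "occ \<U> x - \<B> \<subseteq> occ \<U> x - \<A>" for x
    using assms(2) by blast
  with assms(1) show ?thesis
    unfolding occ_filter_def by (auto dest: finite_subset)
qed

lemma occ_filter_Int_carrier:
  assumes "\<A> \<in> occ_filter X \<U>"
  shows "\<U> \<inter> \<A> \<in> occ_filter X \<U>"
proof -
  have "occ \<U> x - \<U> \<inter> \<A> = occ \<U> x - \<A>" for x
    using occ_subset[of \<U> x] by blast
  with assms show ?thesis
    unfolding occ_filter_def by simp
qed

lemma occ_filter_Diff_finite:
  assumes "\<A> \<in> occ_filter X \<U>" "finite \<P>"
  shows "\<A> - \<P> \<in> occ_filter X \<U>"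
proof -
  obtain x where "x \<in> X" "finite (occ \<U> x - \<A>)"
    using assms(1) unfolding occ_filter_def by blast
  moreover have "occ \<U> x - (\<A> - \<P>) \<subseteq> (occ \<U> x - \<A>) \<union> \<P>"
    by blast
  ultimately show ?thesis
    using assms(2) unfolding occ_filter_def by (blast intro: finite_subset)
qed

lemma occ_filter_Int:
  assumes "tau_cover X \<U>" "\<A> \<in> occ_filter X \<U>" "\<B> \<in> occ_filter X \<U>"
  shows "\<A> \<inter> \<B> \<in> occ_filter X \<U>"
proof -
  obtain x y where x: "x \<in> X" "finite (occ \<U> x - \<A>)" and y: "y \<in> X" "finite (occ \<U> y - \<B>)"
    using assms(2,3) unfolding occ_filter_def by blast
  have "finite (occ \<U> x - \<A> \<inter> \<B>) \<or> finite (occ \<U> y - \<A> \<inter> \<B>)"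
    using tau_cover_occ_comparable[OF assms(1) x(1) y(1)]
  proof
    assume "finite (occ \<U> x - occ \<U> y)"
    moreover have "occ \<U> x - \<A> \<inter> \<B> \<subseteq> (occ \<U> x - \<A>) \<union> (occ \<U> x - occ \<U> y) \<union> (occ \<U> y - \<B>)"
      by blast
    ultimately show ?thesis
      using x y by (simp add: finite_subset)
  next
    assume "finite (occ \<U> y - occ \<U> x)"
    moreover have "occ \<U> y - \<A> \<inter> \<B> \<subseteq> (occ \<U> y - \<B>) \<union> (occ \<U> y - occ \<U> x) \<union> (occ \<U> x - \<A>)"
      by blast
    ultimately show ?thesis
      using x y by (simp add: finite_subset)
  qed
  then show ?thesis
    using x(1) y(1) unfolding occ_filter_def by blast
qed

lemma occ_filter_infinite:
  assumes "tau_cover X \<U>" "\<A> \<in> occ_filter X \<U>"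
  shows "infinite (\<U> \<inter> \<A>)"
proof -
  obtain x where x: "x \<in> X" "finite (occ \<U> x - \<A>)"
    using assms(2) unfolding occ_filter_def by blast
  have "occ \<U> x \<subseteq> (occ \<U> x - \<A>) \<union> (\<U> \<inter> \<A>)"
    using occ_subset[of \<U> x] by blast
  with tau_cover_occ_infinite[OF assms(1) x(1)] x(2) show ?thesis
    by (meson finite_Un finite_subset)
qed

lemma occ_filter_ultra_if_unsplittable:
  assumes "\<not> (\<exists>\<W>\<subseteq>\<U>. \<forall>x\<in>X. infinite (occ \<W> x) \<and> infinite (occ (\<U> - \<W>) x))" "\<A> \<subseteq> \<U>"
  shows "\<A> \<in> occ_filter X \<U> \<or> \<U> - \<A> \<in> occ_filter X \<U>"
proof -
  obtain x where x: "x \<in> X" "finite (occ \<A> x) \<or> finite (occ (\<U> - \<A>) x)"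
    using assms by blast
  moreover have "occ \<A> x = occ \<U> x - (\<U> - \<A>)" "occ (\<U> - \<A>) x = occ \<U> x - \<A>"
    using assms(2) unfolding occ_def by blast+
  ultimately show ?thesis
    unfolding occ_filter_def by auto
qed

lemma occ_filter_finite_Union:
  assumes tau: "tau_cover X \<U>"
    and ultra: "\<And>\<A>. \<A> \<subseteq> \<U> \<Longrightarrow> \<A> \<in> occ_filter X \<U> \<or> \<U> - \<A> \<in> occ_filter X \<U>"
    and "finite K" "\<A> \<in> occ_filter X \<U>" "\<A> \<subseteq> (\<Union>k\<in>K. \<B> k)"
  shows "\<exists>k\<in>K. \<B> k \<in> occ_filter X \<U>"
  using assms(3-5)
proof (induction K arbitrary: \<A> rule: finite_induct)
  case empty
  then show ?case
    using occ_filter_infinite[OF tau, of "{}"] by simp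
next
  case (insert k K)
  show ?case
  proof (cases "\<U> \<inter> \<B> k \<in> occ_filter X \<U>")
    case True
    then show ?thesis
      by (blast intro: occ_filter_mono)
  next
    case False
    moreover have "\<U> - \<U> \<inter> \<B> k = \<U> - \<B> k"
      by blast
    ultimately have "\<U> - \<B> k \<in> occ_filter X \<U>"
      using ultra[of "\<U> \<inter> \<B> k"] by auto
    then have "\<A> \<inter> (\<U> - \<B> k) \<in> occ_filter X \<U>"
      using occ_filter_Int[OF tau insert.prems(1)] by blast
    moreover have "\<A> \<inter> (\<U> - \<B> k) \<subseteq> (\<Union>k\<in>K. \<B> k)"
      using insert.prems(2) by blast
    ultimately show ?thesis
      using insert.IH by blast
  qed
qed

definition cofinal_in :: "'a set set \<Rightarrow> 'a set \<Rightarrow> 'a set \<Rightarrow> bool" where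
  "cofinal_in \<U> Y X \<longleftrightarrow> (\<forall>x\<in>X. \<exists>y\<in>Y. finite (occ \<U> y - occ \<U> x))"

lemma occ_filter_cofinal:
  assumes "cofinal_in \<U> Y X" "\<A> \<in> occ_filter X \<U>"
  shows "\<A> \<in> occ_filter Y \<U>"
proof -
  obtain x where x: "x \<in> X" "finite (occ \<U> x - \<A>)"
    using assms(2) unfolding occ_filter_def by blast
  then obtain y where y: "y \<in> Y" "finite (occ \<U> y - occ \<U> x)"
    using assms(1) unfolding cofinal_in_def by blast
  have "occ \<U> y - \<A> \<subseteq> (occ \<U> y - occ \<U> x) \<union> (occ \<U> x - \<A>)"
    by blast
  then have "finite (occ \<U> y - \<A>)"
    using x(2) y(2) by (simp add: finite_subset)
  then show ?thesis
    using y(1) unfolding occ_filter_def by blast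
qed

definition trace_family :: "'a set \<Rightarrow> 'a set set \<Rightarrow> 'a set set" where
  "trace_family Y \<U> = (\<lambda>U. U \<inter> Y) ` {U\<in>\<U>. \<not> Y \<subseteq> U}"

lemma Y_notin_trace_family: "Y \<notin> trace_family Y \<U>"
  unfolding trace_family_def by auto

context
  fixes X Y :: "real set" and \<U> :: "real set set"
  assumes tau: "tau_cover X \<U>" and Y: "Y \<subseteq> X" and cofinal: "cofinal_in \<U> Y X"
    and ultra: "\<And>\<A>. \<A> \<subseteq> \<U> \<Longrightarrow> \<A> \<in> occ_filter X \<U> \<or> \<U> - \<A> \<in> occ_filter X \<U>"
begin

lemma finite_members_containing_cofinal:
  "finite {U\<in>\<U>. Y \<subseteq> U}" (is "finite ?P")
proof (rule ccontr)
  assume "infinite ?P"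
  then obtain \<H> \<H>' where \<H>: "\<H> \<subseteq> ?P" "\<H>' \<subseteq> ?P" "infinite \<H>" "infinite \<H>'" "\<H> \<inter> \<H>' = {}"
    by (rule infinite_split)
  obtain \<L> where \<L>: "\<L> \<in> occ_filter X \<U>" "\<L> = \<H> \<or> \<L> = \<U> - \<H>"
    using ultra[of \<H>] \<H>(1) by blast
  then obtain z where z: "z \<in> Y" "finite (occ \<U> z - \<L>)"
    using occ_filter_cofinal[OF cofinal] unfolding occ_filter_def by blast
  have "?P - \<L> \<subseteq> occ \<U> z - \<L>"
    using z(1) unfolding occ_def by blast
  then have "finite (?P - \<L>)"
    using z(2) by (rule finite_subset)
  moreover have "\<H>' \<subseteq> ?P - \<H>" "\<H> \<subseteq> ?P - (\<U> - \<H>)"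
    using \<H> by blast+
  ultimately show False
    using \<L>(2) \<H>(3,4) finite_subset[of \<H>' "?P - \<H>"] finite_subset[of \<H> "?P - (\<U> - \<H>)"]
    by auto
qed

lemma trace_fiber_not_in_occ_filter:
  assumes "V \<in> trace_family Y \<U>"
  shows "{U\<in>\<U>. U \<inter> Y = V} \<notin> occ_filter X \<U>"
proof
  assume fiber: "{U\<in>\<U>. U \<inter> Y = V} \<in> occ_filter X \<U>"
  obtain z where z: "z \<in> Y" "z \<notin> V"
    using assms unfolding trace_family_def by blast
  have "occ \<U> z \<inter> {U\<in>\<U>. U \<inter> Y = V} = {}"
    using z unfolding occ_def by blast
  moreover have "occ \<U> z \<inter> {U\<in>\<U>. U \<inter> Y = V} \<in> occ_filter X \<U>"
    using occ_filter_Int[OF tau occ_in_occ_filter fiber] z(1) Y by blast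
  ultimately show False
    using occ_filter_infinite[OF tau, of "{}"] by simp
qed

lemma trace_image_infinite:
  assumes "\<A> \<in> occ_filter X \<U>"
  shows "infinite ((\<lambda>U. U \<inter> Y) ` (\<A> \<inter> {U\<in>\<U>. \<not> Y \<subseteq> U}))" (is "infinite ?K")
proof
  assume "finite ?K"
  \<comment> \<open>The fibres of \<open>\<lambda>U. U \<inter> Y\<close> lie outside the ultrafilter, so finitely many of them
    cannot cover a member of it.\<close>
  have "\<A> \<inter> {U\<in>\<U>. \<not> Y \<subseteq> U} = \<U> \<inter> \<A> - {U\<in>\<U>. Y \<subseteq> U}"
    by blast
  then have in_filter: "\<A> \<inter> {U\<in>\<U>. \<not> Y \<subseteq> U} \<in> occ_filter X \<U>"
    using occ_filter_Diff_finite[OF occ_filter_Int_carrier[OF assms] finite_members_containing_cofinal]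
    by simp
  have covered: "\<A> \<inter> {U\<in>\<U>. \<not> Y \<subseteq> U} \<subseteq> (\<Union>V\<in>?K. {U\<in>\<U>. U \<inter> Y = V})"
  proof
    fix U assume "U \<in> \<A> \<inter> {U\<in>\<U>. \<not> Y \<subseteq> U}"
    then show "U \<in> (\<Union>V\<in>?K. {U\<in>\<U>. U \<inter> Y = V})"
      by (intro UN_I[of "U \<inter> Y"]) auto
  qed
  obtain V where "V \<in> ?K" "{U\<in>\<U>. U \<inter> Y = V} \<in> occ_filter X \<U>"
    using occ_filter_finite_Union[OF tau ultra \<open>finite ?K\<close> in_filter covered] by blast
  moreover have "V \<in> trace_family Y \<U>"
    using \<open>V \<in> ?K\<close> unfolding trace_family_def by blast
  ultimately show False
    using trace_fiber_not_in_occ_filter by blast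
qed

lemma occ_trace_family:
  assumes "y \<in> Y"
  shows "occ (trace_family Y \<U>) y = (\<lambda>U. U \<inter> Y) ` (occ \<U> y \<inter> {U\<in>\<U>. \<not> Y \<subseteq> U})"
  using assms unfolding trace_family_def occ_def by auto

lemma tau_cover_trace_family: "tau_cover Y (trace_family Y \<U>)"
  unfolding tau_cover_iff
proof (intro conjI ballI)
  fix y z assume y: "y \<in> Y" and z: "z \<in> Y"
  show "infinite (occ (trace_family Y \<U>) y)"
    using trace_image_infinite[OF occ_in_occ_filter] y Y by (simp add: occ_trace_family subsetD)
  have "occ (trace_family Y \<U>) y - occ (trace_family Y \<U>) z \<subseteq> (\<lambda>U. U \<inter> Y) ` (occ \<U> y - occ \<U> z)"
    if "y \<in> Y" "z \<in> Y" for y z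
    using that unfolding trace_family_def occ_def by auto
  then show "finite (occ (trace_family Y \<U>) y - occ (trace_family Y \<U>) z) \<or>
      finite (occ (trace_family Y \<U>) z - occ (trace_family Y \<U>) y)"
    using tau_cover_occ_comparable[OF tau, of y z] y z Y by (meson finite_imageI finite_subset subsetD)
qed (auto simp: trace_family_def)

lemma no_tau_cover_avoiding_filter_image:
  assumes "\<A> \<in> occ_filter X \<U>" "\<W> \<subseteq> trace_family Y \<U> - (\<lambda>U. U \<inter> Y) ` \<A>"
  shows "\<not> tau_cover Y \<W>"
proof
  assume "tau_cover Y \<W>"
  obtain z where z: "z \<in> Y" "finite (occ \<U> z - \<A>)"
    using occ_filter_cofinal[OF cofinal assms(1)] unfolding occ_filter_def by blast
  have "occ \<W> z \<subseteq> (\<lambda>U. U \<inter> Y) ` (occ \<U> z - \<A>)"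
    using assms(2) unfolding trace_family_def occ_def by auto
  then have "finite (occ \<W> z)"
    using z(2) by (simp add: finite_subset)
  then show False
    using tau_cover_occ_infinite[OF \<open>tau_cover Y \<W>\<close> z(1)] by simp
qed

lemma trace_family_not_split:
  assumes \<V>: "\<V>\<^sub>1 \<inter> \<V>\<^sub>2 = {}" "\<V>\<^sub>1 \<union> \<V>\<^sub>2 = trace_family Y \<U>"
    and \<W>: "\<W>\<^sub>1 \<subseteq> \<V>\<^sub>1" "tau_cover Y \<W>\<^sub>1" "\<W>\<^sub>2 \<subseteq> \<V>\<^sub>2" "tau_cover Y \<W>\<^sub>2"
  shows False
proof -
  let ?f = "\<lambda>U. U \<inter> Y" and ?\<T> = "trace_family Y \<U>"
  define \<A> where "\<A> = {U\<in>\<U>. \<not> Y \<subseteq> U \<and> ?f U \<in> \<V>\<^sub>1}"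
  have "?f ` \<A> \<subseteq> \<V>\<^sub>1"
    unfolding \<A>_def by blast
  with \<V> \<W>(3) have \<W>\<^sub>2: "\<W>\<^sub>2 \<subseteq> ?\<T> - ?f ` \<A>"
    by blast
  have "?f ` (\<U> - \<A>) \<subseteq> - \<V>\<^sub>1"
  proof (rule image_subsetI)
    fix U assume U: "U \<in> \<U> - \<A>"
    show "?f U \<in> - \<V>\<^sub>1"
    proof (cases "Y \<subseteq> U")
      case True
      then have "?f U \<notin> ?\<T>"
        using Y_notin_trace_family[of Y \<U>] by (simp add: Int_absorb1)
      then show ?thesis
        using \<V>(2) by blast
    next
      case False
      then show ?thesis
        using U unfolding \<A>_def by blast
    qed
  qed
  with \<V>(2) \<W>(1) have \<W>\<^sub>1: "\<W>\<^sub>1 \<subseteq> ?\<T> - ?f ` (\<U> - \<A>)"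
    by blast
  have "\<A> \<subseteq> \<U>"
    unfolding \<A>_def by blast
  \<comment> \<open>Whichever of \<open>\<A>\<close> and \<open>\<U> - \<A>\<close> lies in the ultrafilter, its image is avoided by one
    of the two tau-covers.\<close>
  from ultra[OF this] show False
  proof
    assume "\<A> \<in> occ_filter X \<U>"
    with \<W>\<^sub>2 \<W>(4) show False
      using no_tau_cover_avoiding_filter_image by blast
  next
    assume "\<U> - \<A> \<in> occ_filter X \<U>"
    with \<W>\<^sub>1 \<W>(2) show False
      using no_tau_cover_avoiding_filter_image by blast
  qed
qed

end

lemma nonprincipal_ultrafilter_transfer:
  assumes tau: "tau_cover X \<U>" and "X \<noteq> {}" and e: "bij_betw e UNIV \<U>"
    and ultra: "\<And>\<A>. \<A> \<subseteq> \<U> \<Longrightarrow> \<A> \<in> occ_filter X \<U> \<or> \<U> - \<A> \<in> occ_filter X \<U>"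
  shows "nonprincipal_ultrafilter {a. e ` a \<in> occ_filter X \<U>}"
  unfolding nonprincipal_ultrafilter_def mem_Collect_eq
proof (intro conjI allI impI)
  have inj: "inj e" and range: "range e = \<U>"
    using e by (auto simp: bij_betw_def)
  show "e ` {} \<notin> occ_filter X \<U>"
    using occ_filter_infinite[OF tau, of "{}"] by auto
  obtain x where "x \<in> X"
    using \<open>X \<noteq> {}\<close> by blast
  then show "e ` UNIV \<in> occ_filter X \<U>"
    unfolding range by (rule occ_filter_mono[OF occ_in_occ_filter occ_subset])
  show "e ` b \<in> occ_filter X \<U>" if "e ` a \<in> occ_filter X \<U> \<and> a \<subseteq> b" for a b
    using that occ_filter_mono[of "e ` a" X \<U> "e ` b"] by blast
  show "e ` (a \<inter> b) \<in> occ_filter X \<U>" if "e ` a \<in> occ_filter X \<U> \<and> e ` b \<in> occ_filter X \<U>" for a b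
    using that occ_filter_Int[OF tau] by (simp add: image_Int[OF inj])
  show "e ` a \<in> occ_filter X \<U> \<or> e ` (- a) \<in> occ_filter X \<U>" for a
  proof -
    have "e ` (- a) = \<U> - e ` a"
      using range inj by (metis Compl_eq_Diff_UNIV image_set_diff)
    then show ?thesis
      using ultra[of "e ` a"] range by auto
  qed
  show "e ` a \<notin> occ_filter X \<U>" if "finite a" for a
    using that occ_filter_infinite[OF tau, of "e ` a"] by auto
qed

lemma bij_betw_finite_vimage_iff:
  assumes "bij_betw e UNIV \<U>" "\<S> \<subseteq> \<U>"
  shows "finite (e -` \<S>) \<longleftrightarrow> finite \<S>"
proof
  assume "finite (e -` \<S>)"
  moreover have "\<S> = e ` (e -` \<S>)"
    using assms unfolding bij_betw_def by blast
  ultimately show "finite \<S>"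
    by (metis finite_imageI)
next
  assume "finite \<S>"
  then show "finite (e -` \<S>)"
    using assms(1) unfolding bij_betw_def by (blast intro: finite_vimageI)
qed

lemma ultrafilter_base_from_cofinal:
  assumes tau: "tau_cover X \<U>" and "countable \<U>" and "X \<noteq> {}"
    and ultra: "\<And>\<A>. \<A> \<subseteq> \<U> \<Longrightarrow> \<A> \<in> occ_filter X \<U> \<or> \<U> - \<A> \<in> occ_filter X \<U>"
    and C: "C \<subseteq> X" "cofinal_in \<U> C X"
  obtains B where "ultrafilter_base B" "B \<lesssim> C"
proof
  obtain x where "x \<in> X"
    using \<open>X \<noteq> {}\<close> by blast
  then have "infinite \<U>"
    using tau_cover_occ_infinite[OF tau] occ_subset finite_subset by metis
  define e where "e = from_nat_into \<U>"
  have e: "bij_betw e UNIV \<U>"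
    unfolding e_def using bij_betw_from_nat_into \<open>countable \<U>\<close> \<open>infinite \<U>\<close> by blast
  define B where "B = (\<lambda>c. e -` occ \<U> c) ` C"
  show "B \<lesssim> C"
    unfolding B_def by (rule image_lepoll)
  have "finite (e -` occ \<U> c - a) \<longleftrightarrow> finite (occ \<U> c - e ` a)" for c a
  proof -
    have "e -` occ \<U> c - a = e -` (occ \<U> c - e ` a)"
      using e unfolding bij_betw_def inj_def by blast
    moreover have "occ \<U> c - e ` a \<subseteq> \<U>"
      using occ_subset[of \<U> c] by blast
    ultimately show ?thesis
      by (simp add: bij_betw_finite_vimage_iff[OF e])
  qed
  then have "{a. \<exists>b\<in>B. finite (b - a)} = {a. e ` a \<in> occ_filter C \<U>}"
    unfolding B_def occ_filter_def by auto
  also have "\<dots> = {a. e ` a \<in> occ_filter X \<U>}"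
    using occ_filter_cofinal[OF C(2)] C(1) unfolding occ_filter_def by blast
  finally have "nonprincipal_ultrafilter {a. \<exists>b\<in>B. finite (b - a)}"
    using nonprincipal_ultrafilter_transfer[OF tau \<open>X \<noteq> {}\<close> e ultra] by simp
  moreover have "infinite b" if "b \<in> B" for b
    using that tau_cover_occ_infinite[OF tau] C(1) bij_betw_finite_vimage_iff[OF e occ_subset]
    unfolding B_def by blast
  ultimately show "ultrafilter_base B"
    unfolding ultrafilter_base_def by blast
qed

lemma cofinal_points_if_no_cofinal_piece:
  assumes tau: "tau_cover X \<U>" and X: "X = (\<Union>\<alpha>\<in>I. Xs \<alpha>)"
    and no_piece: "\<not> (\<exists>\<alpha>\<in>I. cofinal_in \<U> (Xs \<alpha>) X)"
  obtains c where "c ` I \<subseteq> X" "cofinal_in \<U> (c ` I) X"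
proof -
  obtain c where c: "\<And>\<alpha>. \<alpha> \<in> I \<Longrightarrow> c \<alpha> \<in> X"
    and c_avoids: "\<And>\<alpha> y. \<alpha> \<in> I \<Longrightarrow> y \<in> Xs \<alpha> \<Longrightarrow> infinite (occ \<U> y - occ \<U> (c \<alpha>))"
    using no_piece unfolding cofinal_in_def by metis
  have "cofinal_in \<U> (c ` I) X"
    unfolding cofinal_in_def
  proof
    fix x assume "x \<in> X"
    then obtain \<alpha> where \<alpha>: "\<alpha> \<in> I" "x \<in> Xs \<alpha>"
      using X by blast
    then have "finite (occ \<U> (c \<alpha>) - occ \<U> x)"
      using tau_cover_occ_comparable[OF tau \<open>x \<in> X\<close> c] c_avoids by blast
    then show "\<exists>y\<in>c ` I. finite (occ \<U> y - occ \<U> x)"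
      using \<alpha>(1) by blast
  qed
  with c that show thesis
    by blast
qed

lemma countable_enumeration_infinitely_often:
  assumes "countable B" "B \<noteq> {}"
  obtains h :: "nat \<Rightarrow> 'a" where "range h \<subseteq> B" "\<And>b. b \<in> B \<Longrightarrow> infinite {n. h n = b}"
proof
  define h where "h n = from_nat_into B (fst (prod_decode n))" for n
  show "range h \<subseteq> B"
    unfolding h_def using from_nat_into[OF assms(2)] by blast
  fix b assume "b \<in> B"
  then obtain i where i: "from_nat_into B i = b"
    using from_nat_into_surj[OF assms(1)] by metis
  have "inj (\<lambda>k. prod_encode (i, k))"
    by (rule injI) (metis prod_encode_eq prod.inject)
  then have "infinite (range (\<lambda>k. prod_encode (i, k)))"
    using finite_imageD by blast
  moreover have "range (\<lambda>k. prod_encode (i, k)) \<subseteq> {n. h n = b}"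
    using i unfolding h_def by auto
  ultimately show "infinite {n. h n = b}"
    using finite_subset by blast
qed

lemma strict_mono_choice:
  fixes S :: "nat \<Rightarrow> nat set"
  assumes "\<And>n. infinite (S n)"
  obtains r where "strict_mono r" "\<And>n. r n \<in> S n"
proof -
  have "\<exists>m. m \<in> S n \<and> k < m" for n k
    using assms unfolding infinite_nat_iff_unbounded by blast
  then have "\<exists>r. \<forall>n. r n \<in> S n \<and> r n < r (Suc n)"
    by (intro dependent_nat_choice) blast+
  then show thesis
    using that by (auto simp: strict_mono_Suc_iff)
qed

lemma countable_family_split_by_one_set:
  fixes B :: "nat set set"
  assumes "countable B" "\<forall>b\<in>B. infinite b"
  obtains a where "\<forall>b\<in>B. infinite (b \<inter> a) \<and> infinite (b - a)"
proof (cases "B = {}")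
  case False
  obtain h :: "nat \<Rightarrow> nat set" where h: "range h \<subseteq> B" "\<And>b. b \<in> B \<Longrightarrow> infinite {j. h j = b}"
    using countable_enumeration_infinitely_often[OF assms(1) False] by blast
  obtain r where r: "strict_mono r" "\<And>n. r n \<in> h (n div 2)"
    using strict_mono_choice[of "\<lambda>n. h (n div 2)"] h(1) assms(2) by blast
  \<comment> \<open>Every \<open>b \<in> B\<close> is \<open>h j\<close> for infinitely many \<open>j\<close>; \<open>a\<close> contains \<open>r (2 * j)\<close> but
    not \<open>r (2 * j + 1)\<close>, both of which lie in \<open>h j\<close>.\<close>
  define a where "a = r ` {n. even n}"
  have "infinite (b \<inter> a) \<and> infinite (b - a)" if "b \<in> B" for b
  proof -
    define J where "J = {j. h j = b}"
    have "inj_on (\<lambda>j. r (2 * j + d)) J" for d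
      using strict_mono_eq[OF r(1)] by (auto intro: inj_onI)
    then have "infinite ((\<lambda>j. r (2 * j + d)) ` J)" for d
      using h(2)[OF that] finite_imageD unfolding J_def by blast
    from this[of 0] this[of 1] have "infinite ((\<lambda>j. r (2 * j)) ` J)" "infinite ((\<lambda>j. r (2 * j + 1)) ` J)"
      by simp_all
    moreover have "r (2 * j) \<in> h j" "r (2 * j + 1) \<in> h j" for j
      using r(2)[of "2 * j"] r(2)[of "2 * j + 1"] by simp_all
    then have "(\<lambda>j. r (2 * j)) ` J \<subseteq> b \<inter> a" "(\<lambda>j. r (2 * j + 1)) ` J \<subseteq> b - a"
      using strict_mono_eq[OF r(1)] unfolding J_def a_def by auto
    ultimately show ?thesis
      using finite_subset by metis
  qed
  then show thesis
    using that by blast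
qed (use that in blast)

lemma countable_imp_below_u:
  assumes "countable I"
  shows "below_u I"
  unfolding below_u_def
proof (intro allI impI notI)
  fix B assume B: "ultrafilter_base B" "B \<lesssim> I"
  define F where "F = {a. \<exists>b\<in>B. finite (b - a)}"
  have F: "nonprincipal_ultrafilter F" and infinite: "\<forall>b\<in>B. infinite b"
    using B(1) unfolding ultrafilter_base_def F_def by blast+
  obtain a where a: "\<forall>b\<in>B. infinite (b \<inter> a) \<and> infinite (b - a)"
    using countable_family_split_by_one_set[OF countable_lepoll[OF assms B(2)] infinite] by blast
  from F have "a \<in> F \<or> - a \<in> F"
    unfolding nonprincipal_ultrafilter_def by blast
  moreover have "b - - a = b \<inter> a" for b
    by blast
  ultimately show False
    using a unfolding F_def by auto
qed

lemma finite_subset_Union_incseq: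
  fixes F :: "nat \<Rightarrow> 'a set"
  assumes "incseq F" "finite A" "A \<subseteq> (\<Union>n. F n)"
  obtains n where "A \<subseteq> F n"
proof -
  have "\<exists>n. A \<subseteq> F n"
    using assms(2,3)
  proof (induction A rule: finite_induct)
    case (insert a A)
    then obtain m n where "A \<subseteq> F m" "a \<in> F n"
      by blast
    then have "insert a A \<subseteq> F (max m n)"
      using monoD[OF assms(1), of m "max m n"] monoD[OF assms(1), of n "max m n"] by auto
    then show ?case
      by blast
  qed simp
  then show thesis
    using that by blast
qed

lemma infinite_occ_Union_incseq:
  assumes "incseq \<C>" "\<And>n. \<Union>(\<U> - \<C> n) \<subseteq> \<Union>(\<C> (Suc n) - \<C> n)" "infinite (occ \<U> x)"
  shows "infinite (occ (\<Union>n. \<C> n) x)" (is "infinite (occ ?\<W> x)")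
proof
  assume "finite (occ ?\<W> x)"
  with \<open>incseq \<C>\<close> obtain N where N: "occ ?\<W> x \<subseteq> \<C> N"
    using occ_subset[of ?\<W> x] by (rule finite_subset_Union_incseq)
  have "\<not> occ \<U> x \<subseteq> \<C> N"
  proof
    assume "occ \<U> x \<subseteq> \<C> N"
    then have "occ \<U> x \<subseteq> occ ?\<W> x"
      unfolding occ_def by blast
    then show False
      using assms(3) \<open>finite (occ ?\<W> x)\<close> finite_subset by blast
  qed
  then have "x \<in> \<Union>(\<C> (Suc N) - \<C> N)"
    using assms(2)[of N] unfolding occ_def by blast
  then obtain V where "V \<in> occ ?\<W> x" "V \<notin> \<C> N"
    unfolding occ_def by blast
  with N show False
    by blast
qed

lemma countable_subfamily_keeping_infinite_occ:
  fixes \<U> :: "'a::second_countable_topology set set"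
  assumes "\<And>U. U \<in> \<U> \<Longrightarrow> openin (top_of_set X) U"
  obtains \<W> where "\<W> \<subseteq> \<U>" "countable \<W>" "\<And>x. infinite (occ \<U> x) \<Longrightarrow> infinite (occ \<W> x)"
proof -
  have "\<forall>\<C>. \<exists>\<D>. \<D> \<subseteq> \<U> - \<C> \<and> countable \<D> \<and> \<Union>\<D> = \<Union>(\<U> - \<C>)"
    using Lindelof_openin assms by (metis Diff_subset subsetD)
  then obtain D where D: "\<And>\<C>. D \<C> \<subseteq> \<U> - \<C>" "\<And>\<C>. countable (D \<C>)" "\<And>\<C>. \<Union>(D \<C>) = \<Union>(\<U> - \<C>)"
    by metis
  define \<C> where "\<C> n = ((\<lambda>\<C>. \<C> \<union> D \<C>) ^^ n) {}" for n
  have \<C>_Suc: "\<C> (Suc n) = \<C> n \<union> D (\<C> n)" for n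
    unfolding \<C>_def by simp
  have "\<C> n \<subseteq> \<U> \<and> countable (\<C> n)" for n
    by (induction n) (use D in \<open>auto simp: \<C>_def\<close>)
  then have "(\<Union>n. \<C> n) \<subseteq> \<U>" "countable (\<Union>n. \<C> n)"
    by auto
  moreover have incseq: "incseq \<C>"
    by (rule incseq_SucI) (simp add: \<C>_Suc)
  moreover have cover: "\<Union>(\<U> - \<C> n) \<subseteq> \<Union>(\<C> (Suc n) - \<C> n)" for n
  proof -
    have "D (\<C> n) \<subseteq> \<C> (Suc n) - \<C> n"
      using D(1)[of "\<C> n"] \<C>_Suc[of n] by blast
    then show ?thesis
      unfolding D(3)[symmetric] by blast
  qed
  ultimately show thesis
    using that infinite_occ_Union_incseq[OF incseq cover] by metis
qed

lemma openin_Int_subspace: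
  assumes "openin (top_of_set X) U" "Y \<subseteq> X"
  shows "openin (top_of_set Y) (U \<inter> Y)"
  using openin_subtopology_Int[OF assms(1), of Y] assms(2)
  by (simp add: subtopology_subtopology Int_absorb1)

lemma closedin_Int_subspace:
  assumes "closedin (top_of_set X) U" "Y \<subseteq> X"
  shows "closedin (top_of_set Y) (U \<inter> Y)"
  using closedin_subtopology_Int_closed[OF assms(1), of Y] assms(2)
  by (simp add: subtopology_subtopology Int_absorb1 Int_commute)

lemma countable_T_subcover:
  assumes "\<U> \<in> T_covers X"
  shows "\<exists>\<W>\<subseteq>\<U>. countable \<W> \<and> \<W> \<in> T_covers X"
proof -
  have tau: "tau_cover X \<U>" and opn: "\<And>U. U \<in> \<U> \<Longrightarrow> openin (top_of_set X) U"
    using assms unfolding T_covers_def by blast+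
  obtain \<W> where \<W>: "\<W> \<subseteq> \<U>" "countable \<W>" "\<And>x. infinite (occ \<U> x) \<Longrightarrow> infinite (occ \<W> x)"
    using countable_subfamily_keeping_infinite_occ[OF opn] by blast
  have "\<forall>x\<in>X. infinite (occ \<W> x)"
    using \<W>(3) tau_cover_occ_infinite[OF tau] by blast
  then have "tau_cover X \<W>"
    by (rule tau_cover_subfamily[OF tau \<W>(1)])
  then show ?thesis
    using opn \<W>(1,2) unfolding T_covers_def by blast
qed

lemma SplitE:
  assumes "Split UU VV X" "\<U> \<in> UU X"
  obtains \<V>\<^sub>1 \<V>\<^sub>2 \<W>\<^sub>1 \<W>\<^sub>2 where "\<V>\<^sub>1 \<inter> \<V>\<^sub>2 = {}" "\<V>\<^sub>1 \<union> \<V>\<^sub>2 = \<U>"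
    "\<W>\<^sub>1 \<subseteq> \<V>\<^sub>1" "\<W>\<^sub>1 \<in> VV X" "\<W>\<^sub>2 \<subseteq> \<V>\<^sub>2" "\<W>\<^sub>2 \<in> VV X"
proof -
  have "\<exists>\<V>\<^sub>1 \<V>\<^sub>2. \<V>\<^sub>1 \<inter> \<V>\<^sub>2 = {} \<and> \<V>\<^sub>1 \<union> \<V>\<^sub>2 = \<U> \<and>
      (\<exists>\<W>. \<W> \<subseteq> \<V>\<^sub>1 \<and> \<W> \<in> VV X) \<and> (\<exists>\<W>. \<W> \<subseteq> \<V>\<^sub>2 \<and> \<W> \<in> VV X)"
    using assms(1)[unfolded Split_def] assms(2) by (rule bspec)
  then show thesis
    using that by blast
qed

locale tau_cover_class =
  fixes CC :: "real set \<Rightarrow> real set set set"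
  assumes tau_cover: "\<U> \<in> CC X \<Longrightarrow> tau_cover X \<U>"
    and subfamily: "\<U> \<in> CC X \<Longrightarrow> \<W> \<subseteq> \<U> \<Longrightarrow> \<forall>x\<in>X. infinite (occ \<W> x) \<Longrightarrow> \<W> \<in> CC X"
    and trace: "\<U> \<in> CC X \<Longrightarrow> Y \<subseteq> X \<Longrightarrow> tau_cover Y \<T> \<Longrightarrow> \<T> \<subseteq> (\<lambda>U. U \<inter> Y) ` \<U> \<Longrightarrow> \<T> \<in> CC Y"
    and countable_subcover: "\<U> \<in> CC X \<Longrightarrow> \<exists>\<W>\<subseteq>\<U>. countable \<W> \<and> \<W> \<in> CC X"
begin

lemma cofinal_piece_not_Split:
  assumes \<U>: "\<U> \<in> CC X" and Y: "Y \<subseteq> X" and cofinal: "cofinal_in \<U> Y X"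
    and ultra: "\<And>\<A>. \<A> \<subseteq> \<U> \<Longrightarrow> \<A> \<in> occ_filter X \<U> \<or> \<U> - \<A> \<in> occ_filter X \<U>"
  shows "\<not> Split CC CC Y"
proof
  assume "Split CC CC Y"
  have tau: "tau_cover X \<U>"
    using \<U> by (rule tau_cover)
  have "trace_family Y \<U> \<subseteq> (\<lambda>U. U \<inter> Y) ` \<U>"
    unfolding trace_family_def by blast
  then have "trace_family Y \<U> \<in> CC Y"
    using trace[OF \<U> Y tau_cover_trace_family[OF tau Y cofinal ultra]] by blast
  with \<open>Split CC CC Y\<close> obtain \<V>\<^sub>1 \<V>\<^sub>2 \<W>\<^sub>1 \<W>\<^sub>2
    where "\<V>\<^sub>1 \<inter> \<V>\<^sub>2 = {}" "\<V>\<^sub>1 \<union> \<V>\<^sub>2 = trace_family Y \<U>"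
      "\<W>\<^sub>1 \<subseteq> \<V>\<^sub>1" "\<W>\<^sub>1 \<in> CC Y" "\<W>\<^sub>2 \<subseteq> \<V>\<^sub>2" "\<W>\<^sub>2 \<in> CC Y"
    by (rule SplitE)
  then show False
    using trace_family_not_split[OF tau Y cofinal ultra] tau_cover by metis
qed

lemma countable_cover_has_splitting_subfamily:
  fixes I :: "'i set"
  assumes \<U>: "\<U> \<in> CC X" "countable \<U>" and X: "X = (\<Union>\<alpha>\<in>I. Xs \<alpha>)"
    and small: "below_u I" and pieces: "\<forall>\<alpha>\<in>I. Split CC CC (Xs \<alpha>)"
  shows "\<exists>\<V>\<subseteq>\<U>. \<forall>x\<in>X. infinite (occ \<V> x) \<and> infinite (occ (\<U> - \<V>) x)"
proof (rule ccontr)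
  assume unsplittable: "\<not> ?thesis"
  then have "X \<noteq> {}"
    by blast
  have tau: "tau_cover X \<U>"
    using \<U>(1) by (rule tau_cover)
  note ultra = occ_filter_ultra_if_unsplittable[OF unsplittable]
  show False
  proof (cases "\<exists>\<alpha>\<in>I. cofinal_in \<U> (Xs \<alpha>) X")
    case True
    then obtain \<alpha> where \<alpha>: "\<alpha> \<in> I" "cofinal_in \<U> (Xs \<alpha>) X"
      by blast
    moreover have "Xs \<alpha> \<subseteq> X"
      using X \<alpha>(1) by blast
    ultimately show False
      using cofinal_piece_not_Split[OF \<U>(1) _ _ ultra] pieces by blast
  next
    case False
    then obtain c where "c ` I \<subseteq> X" "cofinal_in \<U> (c ` I) X"
      using cofinal_points_if_no_cofinal_piece[OF tau X] by blast
    then obtain B where "ultrafilter_base B" "B \<lesssim> c ` I"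
      using ultrafilter_base_from_cofinal[OF tau \<U>(2) \<open>X \<noteq> {}\<close> ultra] by blast
    moreover have "c ` I \<lesssim> I"
      by (rule image_lepoll)
    ultimately show False
      using small lepoll_trans unfolding below_u_def by blast
  qed
qed

theorem Split_UN:
  fixes I :: "'i set"
  assumes "below_u I" "\<forall>\<alpha>\<in>I. Split CC CC (Xs \<alpha>)"
  shows "Split CC CC (\<Union>\<alpha>\<in>I. Xs \<alpha>)" (is "Split CC CC ?X")
  unfolding Split_def
proof
  fix \<U> assume "\<U> \<in> CC ?X"
  then obtain \<W> where \<W>: "\<W> \<subseteq> \<U>" "countable \<W>" "\<W> \<in> CC ?X"
    using countable_subcover by blast
  then obtain \<V> where \<V>: "\<V> \<subseteq> \<W>" "\<forall>x\<in>?X. infinite (occ \<V> x) \<and> infinite (occ (\<W> - \<V>) x)"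
    using countable_cover_has_splitting_subfamily[OF \<W>(3,2) refl assms] by blast
  have "\<V> \<in> CC ?X" "\<W> - \<V> \<in> CC ?X"
    using subfamily[OF \<W>(3)] \<V> by auto
  moreover have "\<V> \<subseteq> \<U>" "\<W> - \<V> \<subseteq> \<U> - \<V>"
    using \<W>(1) \<V>(1) by blast+
  ultimately show "\<exists>\<V>\<^sub>1 \<V>\<^sub>2. \<V>\<^sub>1 \<inter> \<V>\<^sub>2 = {} \<and> \<V>\<^sub>1 \<union> \<V>\<^sub>2 = \<U> \<and>
      (\<exists>\<W>. \<W> \<subseteq> \<V>\<^sub>1 \<and> \<W> \<in> CC ?X) \<and> (\<exists>\<W>. \<W> \<subseteq> \<V>\<^sub>2 \<and> \<W> \<in> CC ?X)"
    by (intro exI[of _ \<V>] exI[of _ "\<U> - \<V>"]) blast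
qed

end

interpretation T: tau_cover_class T_covers
proof
  fix X \<U> assume "\<U> \<in> T_covers X"
  then show "tau_cover X \<U>"
    by (simp add: T_covers_def)
next
  fix X \<U> \<W> assume "\<U> \<in> T_covers X" "\<W> \<subseteq> \<U>" "\<forall>x\<in>X. infinite (occ \<W> x)"
  then show "\<W> \<in> T_covers X"
    using tau_cover_subfamily[of X \<U> \<W>] by (auto simp: T_covers_def)
next
  fix X Y \<U> \<T> assume "\<U> \<in> T_covers X" "Y \<subseteq> X" "tau_cover Y \<T>" "\<T> \<subseteq> (\<lambda>U. U \<inter> Y) ` \<U>"
  then show "\<T> \<in> T_covers Y"
    using openin_Int_subspace[of X _ Y] by (auto simp: T_covers_def)
next
  fix X \<U> assume "\<U> \<in> T_covers X"
  then show "\<exists>\<W>\<subseteq>\<U>. countable \<W> \<and> \<W> \<in> T_covers X"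
    by (rule countable_T_subcover)
qed

interpretation BT: tau_cover_class BT_covers
proof
  fix X \<U> assume "\<U> \<in> BT_covers X"
  then show "tau_cover X \<U>"
    by (simp add: BT_covers_def)
next
  fix X \<U> \<W> assume "\<U> \<in> BT_covers X" "\<W> \<subseteq> \<U>" "\<forall>x\<in>X. infinite (occ \<W> x)"
  then show "\<W> \<in> BT_covers X"
    using tau_cover_subfamily[of X \<U> \<W>] countable_subset[of \<W> \<U>] by (auto simp: BT_covers_def)
next
  fix X Y \<U> \<T> assume \<U>: "\<U> \<in> BT_covers X" and "Y \<subseteq> X" "tau_cover Y \<T>"
    and \<T>: "\<T> \<subseteq> (\<lambda>U. U \<inter> Y) ` \<U>"
  have "\<exists>B\<in>sets borel. V = Y \<inter> B" if "V \<in> \<T>" for V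
  proof -
    obtain U where "U \<in> \<U>" "V = U \<inter> Y"
      using \<open>V \<in> \<T>\<close> \<T> by blast
    moreover obtain B where "B \<in> sets borel" "U = X \<inter> B"
      using \<U> \<open>U \<in> \<U>\<close> by (auto simp: BT_covers_def)
    ultimately show ?thesis
      using \<open>Y \<subseteq> X\<close> by blast
  qed
  moreover have "countable \<T>"
    using \<U> countable_subset[OF \<T>] by (simp add: BT_covers_def)
  ultimately show "\<T> \<in> BT_covers Y"
    using \<open>tau_cover Y \<T>\<close> by (simp add: BT_covers_def)
next
  fix X \<U> assume "\<U> \<in> BT_covers X"
  then show "\<exists>\<W>\<subseteq>\<U>. countable \<W> \<and> \<W> \<in> BT_covers X"
    by (auto simp: BT_covers_def)
qed

interpretation CT: tau_cover_class CT_covers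
proof
  fix X \<U> assume "\<U> \<in> CT_covers X"
  then show "tau_cover X \<U>"
    by (simp add: CT_covers_def)
next
  fix X \<U> \<W> assume "\<U> \<in> CT_covers X" "\<W> \<subseteq> \<U>" "\<forall>x\<in>X. infinite (occ \<W> x)"
  then show "\<W> \<in> CT_covers X"
    using tau_cover_subfamily[of X \<U> \<W>] countable_subset[of \<W> \<U>] by (auto simp: CT_covers_def)
next
  fix X Y \<U> \<T> assume \<U>: "\<U> \<in> CT_covers X" and "Y \<subseteq> X" "tau_cover Y \<T>"
    and \<T>: "\<T> \<subseteq> (\<lambda>U. U \<inter> Y) ` \<U>"
  have "openin (top_of_set Y) V \<and> closedin (top_of_set Y) V" if "V \<in> \<T>" for V
  proof -
    obtain U where "U \<in> \<U>" "V = U \<inter> Y"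
      using \<open>V \<in> \<T>\<close> \<T> by blast
    then show ?thesis
      using \<U> \<open>Y \<subseteq> X\<close> openin_Int_subspace[of X U Y] closedin_Int_subspace[of X U Y]
      by (simp add: CT_covers_def)
  qed
  moreover have "countable \<T>"
    using \<U> countable_subset[OF \<T>] by (simp add: CT_covers_def)
  ultimately show "\<T> \<in> CT_covers Y"
    using \<open>tau_cover Y \<T>\<close> by (simp add: CT_covers_def)
next
  fix X \<U> assume "\<U> \<in> CT_covers X"
  then show "\<exists>\<W>\<subseteq>\<U>. countable \<W> \<and> \<W> \<in> CT_covers X"
    by (auto simp: CT_covers_def)
qed

theorem theorem6p4:
  fixes X :: "real set" and I :: "'i set" and Xs :: "'i \<Rightarrow> real set"
  assumes "infinite X" and "X = (\<Union>\<alpha>\<in>I. Xs \<alpha>)"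
  shows
    "(below_u I \<and> (\<forall>\<alpha>\<in>I. Split T_covers T_covers (Xs \<alpha>)) \<longrightarrow> Split T_covers T_covers X) \<and>
     (below_u I \<and> (\<forall>\<alpha>\<in>I. Split BT_covers BT_covers (Xs \<alpha>)) \<longrightarrow> Split BT_covers BT_covers X) \<and>
     (below_u I \<and> (\<forall>\<alpha>\<in>I. Split CT_covers CT_covers (Xs \<alpha>)) \<longrightarrow> Split CT_covers CT_covers X) \<and>
     (countable I \<and> (\<forall>\<alpha>\<in>I. Split T_covers T_covers (Xs \<alpha>)) \<longrightarrow> Split T_covers T_covers X) \<and>
     (countable I \<and> (\<forall>\<alpha>\<in>I. Split BT_covers BT_covers (Xs \<alpha>)) \<longrightarrow> Split BT_covers BT_covers X) \<and>
     (countable I \<and> (\<forall>\<alpha>\<in>I. Split CT_covers CT_covers (Xs \<alpha>)) \<longrightarrow> Split CT_covers CT_covers X)"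
  using T.Split_UN[of I Xs] BT.Split_UN[of I Xs] CT.Split_UN[of I Xs] countable_imp_below_u[of I]
  unfolding assms(2) by blast

end
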